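(* Let $0<\rho<1$ and $c_d\to c\in(0,1]$. For $1\le k\le d$ let $\lambda^k_d(\mathbf{x})=\frac1{d-1}\sum_{i\ne k}\chi_i\big(\frac{x_i}{1-\rho}+\theta_d\sum_{j=1}^dx_j\big)^2$. Then for every $\varepsilon>0$, $\sup_{\mathbf{x}\in F_d}\mathbb{P}^*_k\big(|\lambda^k_d-\frac c{1-\rho}|>\varepsilon\big)\to0$ as $d\to\infty$.
   Context: $\theta_d=\frac{-\rho}{1+(d-2)\rho-(d-1)\rho^2}$. $(\chi_1,\dots,\chi_d)$ are the indicators of a uniformly random subset of $\{1,\dots,d\}$ of size $dc_d$ ($dc_d$ an integer), and $\mathbb{P}^*_k(\cdot)=\mathbb{P}(\cdot\mid\chi_k=1)$. For $\mathbf{x}=(x_1,x_2,\dots)\in\mathbb{R}^\infty$, $\lambda^k_d$ uses its first $d$ coordinates. With $\bar x_d=\frac1{d-2}\sum_{i=3}^dx_i$ and $R_d(\mathbf{x})=\frac1{d-1}\sum_{i=1}^d(x_i-\frac1d\sum_{j=1}^dx_j)^2$, $F_d\subseteq\mathbb{R}^\infty$ is the set of $\mathbf{x}$ such that $|R_d(\mathbf{x})-(1-\rho)|<d^{-1/8}$; $\bar x=\lim_m\bar x_m$ exists and $|\bar x_d-\bar x|<d^{-1/8}$; $\max_{1\le i\le d}|x_i|<d^{1/8}$; $\frac1d\sum_{i=1}^dx_i^2<d^{1/8}$; and $\frac1d\sum_{i=1}^d(\frac{x_i}{1-\rho}+\theta_d\sum_{j=1}^dx_j)^4<d^{1/8}$.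 *)

theory Defs
  imports "HOL-Probability.Probability"
begin

text \<open>Sequences x = (x_1, x_2, ...) in R^infinity are modelled as nat => real;
  index 0 is ignored, coordinates are x 1, x 2, ...\<close>

definition theta :: "real \<Rightarrow> nat \<Rightarrow> real" where
  "theta \<rho> d = - \<rho> / (1 + (real d - 2) * \<rho> - (real d - 1) * \<rho>\<^sup>2)"

definition xbar :: "nat \<Rightarrow> (nat \<Rightarrow> real) \<Rightarrow> real" where
  "xbar d x = (1 / (real d - 2)) * (\<Sum>i=3..d. x i)"

definition Rd :: "nat \<Rightarrow> (nat \<Rightarrow> real) \<Rightarrow> real" where
  "Rd d x = (1 / (real d - 1)) * (\<Sum>i=1..d. (x i - (1 / real d) * (\<Sum>j=1..d. x j))\<^sup>2)"

definition Fset :: "real \<Rightarrow> nat \<Rightarrow> (nat \<Rightarrow> real) set" where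
  "Fset \<rho> d = {x.
      \<bar>Rd d x - (1 - \<rho>)\<bar> < real d powr (-1/8)
    \<and> convergent (\<lambda>m. xbar m x) \<and> \<bar>xbar d x - lim (\<lambda>m. xbar m x)\<bar> < real d powr (-1/8)
    \<and> (\<forall>i\<in>{1..d}. \<bar>x i\<bar> < real d powr (1/8))
    \<and> (1 / real d) * (\<Sum>i=1..d. (x i)\<^sup>2) < real d powr (1/8)
    \<and> (1 / real d) * (\<Sum>i=1..d. (x i / (1 - \<rho>) + theta \<rho> d * (\<Sum>j=1..d. x j)) ^ 4)
        < real d powr (1/8)}"

text \<open>chi_i = indicator of i in the random subset S.\<close>
definition lambda_kd :: "real \<Rightarrow> nat \<Rightarrow> nat \<Rightarrow> (nat \<Rightarrow> real) \<Rightarrow> nat set \<Rightarrow> real" where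
  "lambda_kd \<rho> d k x S = (1 / (real d - 1)) *
     (\<Sum>i\<in>{1..d} - {k}. (if i \<in> S then 1 else 0) *
        (x i / (1 - \<rho>) + theta \<rho> d * (\<Sum>j=1..d. x j))\<^sup>2)"

text \<open>Law of (chi_1..chi_d): uniform random subset of {1..d} of size m.\<close>
definition subset_pmf :: "nat \<Rightarrow> nat \<Rightarrow> nat set pmf" where
  "subset_pmf d m = pmf_of_set {S. S \<subseteq> {1..d} \<and> card S = m}"

definition Pstar :: "nat \<Rightarrow> nat \<Rightarrow> nat \<Rightarrow> nat set pmf" where
  "Pstar d m k = cond_pmf (subset_pmf d m) {S. k \<in> S}"

end

theory Submission
  imports Defs "HOL-Real_Asymp.Real_Asymp"
begin

text \<open>Conditioned on \<chi>_k = 1, the other chosen indices form a uniform (m-1)-subset of the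
  remaining d-1 indices, so (d-1) \<lambda> is a sum sampled without replacement from the values y_i^2,
  where y_i = x_i/(1-\<rho>) + \<theta>_d \<Sum>_j x_j. Its mean is (m-1)/(d-1) times the total, and since all
  pairs of distinct indices are sampled equally often, its variance is at most \<Sum>_i y_i^4, which is
  O(d^(9/8)) on F_d; Chebyshev's inequality then bounds the deviation probability by O(d^(-7/8)).
  The constant \<theta>_d is exactly what makes y_i = (x_i - \<mu>)/(1-\<rho>) + \<mu>/(1+(d-1)\<rho>), with \<mu> the
  mean of x_1, ..., x_d, so \<Sum>_i y_i^2 = (d-1) R_d/(1-\<rho>)^2 + d \<mu>^2/(1+(d-1)\<rho>)^2, and the
  conditions defining F_d force the average of the y_i^2 to 1/(1-\<rho>) uniformly. As
  (m-1)/(d-1) \<longrightarrow> c, \<lambda> concentrates at c/(1-\<rho>).\<close>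

lemma cond_pmf_of_set:
  assumes "finite U" "U \<inter> E \<noteq> {}"
  shows "cond_pmf (pmf_of_set U) E = pmf_of_set (U \<inter> E)"
proof (rule pmf_eqI)
  fix x
  have "U \<noteq> {}" "card U > 0" "card (U \<inter> E) > 0"
    using assms by (auto simp: card_gt_0_iff)
  moreover have "set_pmf (pmf_of_set U) \<inter> E \<noteq> {}"
    using assms \<open>U \<noteq> {}\<close> by simp
  ultimately show "pmf (cond_pmf (pmf_of_set U) E) x = pmf (pmf_of_set (U \<inter> E)) x"
    using assms by (simp add: pmf_cond measure_pmf_of_set indicator_def)
qed

lemma card_subsets_containing:
  assumes "finite X" "B \<subseteq> X"
  shows "card {S. S \<subseteq> X \<and> card S = m \<and> B \<subseteq> S} =
     (if card B \<le> m then (card X - card B) choose (m - card B) else 0)"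
proof (cases "card B \<le> m")
  case True
  have "finite B" using assms finite_subset by blast
  have "bij_betw (\<lambda>T. T \<union> B) {T. T \<subseteq> X - B \<and> card T = m - card B}
          {S. S \<subseteq> X \<and> card S = m \<and> B \<subseteq> S}"
  proof (rule bij_betwI[where g = "\<lambda>S. S - B"])
    show "(\<lambda>T. T \<union> B) \<in> {T. T \<subseteq> X - B \<and> card T = m - card B} \<rightarrow> {S. S \<subseteq> X \<and> card S = m \<and> B \<subseteq> S}"
    proof
      fix T assume T: "T \<in> {T. T \<subseteq> X - B \<and> card T = m - card B}"
      then have "card (T \<union> B) = card T + card B"
        using assms \<open>finite B\<close> by (intro card_Un_disjoint) (auto intro: finite_subset)
      then show "T \<union> B \<in> {S. S \<subseteq> X \<and> card S = m \<and> B \<subseteq> S}"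
        using T True assms by auto
    qed
  qed (use \<open>finite B\<close> in \<open>auto simp: card_Diff_subset\<close>)
  then have "card {S. S \<subseteq> X \<and> card S = m \<and> B \<subseteq> S} = card (X - B) choose (m - card B)"
    using assms by (simp add: bij_betw_same_card[symmetric] n_subsets)
  then show ?thesis
    using True assms \<open>finite B\<close> by (simp add: card_Diff_subset)
next
  case False
  have "card B \<le> card S" if "S \<subseteq> X" "B \<subseteq> S" for S
    using that assms by (meson card_mono finite_subset)
  then have "{S. S \<subseteq> X \<and> card S = m \<and> B \<subseteq> S} = {}"
    using False by auto
  then show ?thesis using False by (metis card.empty)
qed

lemma sum_square_add_const:
  fixes u :: "'a \<Rightarrow> real"
  assumes "(\<Sum>i\<in>I. u i) = 0"
  shows "(\<Sum>i\<in>I. (u i + b)\<^sup>2) = (\<Sum>i\<in>I. (u i)\<^sup>2) + real (card I) * b\<^sup>2"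
proof -
  have "(\<Sum>i\<in>I. (u i + b)\<^sup>2) = (\<Sum>i\<in>I. (u i)\<^sup>2 + 2 * b * u i + b\<^sup>2)"
    by (simp add: power2_sum ac_simps)
  also have "\<dots> = (\<Sum>i\<in>I. (u i)\<^sup>2) + 2 * b * (\<Sum>i\<in>I. u i) + real (card I) * b\<^sup>2"
    by (simp add: sum.distrib flip: sum_distrib_left)
  finally show ?thesis using assms by simp
qed

lemma measure_pmf_of_set_abs_gt_le:
  fixes f :: "'a \<Rightarrow> real"
  assumes "finite V" "V \<noteq> {}" "0 < t"
  shows "measure (pmf_of_set V) {S. t < \<bar>f S\<bar>} \<le> (\<Sum>S\<in>V. (f S)\<^sup>2) / (real (card V) * t\<^sup>2)"
proof -
  have "real (card {S\<in>V. t < \<bar>f S\<bar>}) * t\<^sup>2 = (\<Sum>S | S \<in> V \<and> t < \<bar>f S\<bar>. t\<^sup>2)"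
    by simp
  also have "\<dots> \<le> (\<Sum>S | S \<in> V \<and> t < \<bar>f S\<bar>. (f S)\<^sup>2)"
    using assms(3) by (intro sum_mono) (auto simp: abs_le_square_iff[symmetric])
  also have "\<dots> \<le> (\<Sum>S\<in>V. (f S)\<^sup>2)"
    using assms(1) by (intro sum_mono2) auto
  finally have "real (card {S\<in>V. t < \<bar>f S\<bar>}) / real (card V) \<le> (\<Sum>S\<in>V. (f S)\<^sup>2) / (real (card V) * t\<^sup>2)"
    using assms by (simp add: field_simps card_gt_0_iff)
  moreover have "V \<inter> {S. t < \<bar>f S\<bar>} = {S\<in>V. t < \<bar>f S\<bar>}"
    by auto
  ultimately show ?thesis
    using assms(1,2) by (simp add: measure_pmf_of_set)
qed

lemma sum_square_subset_sum_eq: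
  fixes b :: "'a \<Rightarrow> real" and V :: "'a set set"
  assumes "finite V" "finite A"
  shows "(\<Sum>S\<in>V. (\<Sum>i\<in>A \<inter> S. b i)\<^sup>2)
           = (\<Sum>i\<in>A. \<Sum>j\<in>A. b i * b j * real (card {S\<in>V. i \<in> S \<and> j \<in> S}))"
proof -
  have square: "(\<Sum>i\<in>A \<inter> S. b i)\<^sup>2 = (\<Sum>i\<in>A. \<Sum>j\<in>A. if i \<in> S \<and> j \<in> S then b i * b j else 0)" for S
    unfolding power2_eq_square sum.inter_restrict[OF assms(2)] sum_product
    by (intro sum.cong refl) auto
  have count: "(\<Sum>S\<in>V. if i \<in> S \<and> j \<in> S then b i * b j else 0)
      = b i * b j * real (card {S\<in>V. i \<in> S \<and> j \<in> S})" for i j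
    using assms(1) by (simp flip: sum.inter_filter)
  have "(\<Sum>S\<in>V. (\<Sum>i\<in>A \<inter> S. b i)\<^sup>2)
      = (\<Sum>i\<in>A. \<Sum>S\<in>V. \<Sum>j\<in>A. if i \<in> S \<and> j \<in> S then b i * b j else 0)"
    unfolding square by (rule sum.swap)
  also have "\<dots> = (\<Sum>i\<in>A. \<Sum>j\<in>A. \<Sum>S\<in>V. if i \<in> S \<and> j \<in> S then b i * b j else 0)"
    by (rule sum.cong[OF refl], rule sum.swap)
  finally show ?thesis by (simp add: count)
qed

text \<open>The cross terms add up to \<open>N * (\<Sum>i\<in>A. b i)\<^sup>2 = 0\<close>, and each diagonal count is at
  most \<open>card V\<close>.\<close>

lemma sum_square_subset_sum_le:
  fixes b :: "'a \<Rightarrow> real" and V :: "'a set set"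
  assumes "finite V" "finite A" "(\<Sum>i\<in>A. b i) = 0"
    and pair_count: "\<And>i j. i \<in> A \<Longrightarrow> j \<in> A \<Longrightarrow> i \<noteq> j \<Longrightarrow> card {S\<in>V. i \<in> S \<and> j \<in> S} = N"
  shows "(\<Sum>S\<in>V. (\<Sum>i\<in>A \<inter> S. b i)\<^sup>2) \<le> real (card V) * (\<Sum>i\<in>A. (b i)\<^sup>2)"
proof -
  define c where "c i j = real (card {S\<in>V. i \<in> S \<and> j \<in> S})" for i j
  have split: "b i * b j * c i j = N * (b i * b j) + (if i = j then (b i)\<^sup>2 * (c i i - N) else 0)"
    if "i \<in> A" "j \<in> A" for i j
    using pair_count[OF that] by (auto simp: c_def power2_eq_square algebra_simps)
  have cross_terms: "(\<Sum>i\<in>A. \<Sum>j\<in>A. N * (b i * b j)) = 0"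
  proof -
    have "(\<Sum>i\<in>A. \<Sum>j\<in>A. N * (b i * b j)) = N * (\<Sum>i\<in>A. b i)\<^sup>2"
      unfolding power2_eq_square sum_product by (simp add: sum_distrib_left)
    then show ?thesis using assms(3) by simp
  qed
  have "(\<Sum>S\<in>V. (\<Sum>i\<in>A \<inter> S. b i)\<^sup>2) = (\<Sum>i\<in>A. \<Sum>j\<in>A. b i * b j * c i j)"
    unfolding c_def by (rule sum_square_subset_sum_eq[OF assms(1,2)])
  also have "\<dots> = (\<Sum>i\<in>A. \<Sum>j\<in>A. N * (b i * b j)) + (\<Sum>i\<in>A. (b i)\<^sup>2 * (c i i - N))"
    using assms(2) by (simp add: split sum.distrib cong: sum.cong)
  also have "\<dots> = (\<Sum>i\<in>A. (b i)\<^sup>2 * (c i i - N))"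
    using cross_terms by simp
  also have "\<dots> \<le> (\<Sum>i\<in>A. (b i)\<^sup>2 * c i i)"
    by (intro sum_mono) (simp add: algebra_simps)
  also have "\<dots> \<le> (\<Sum>i\<in>A. (b i)\<^sup>2 * card V)"
    using assms(1) by (intro sum_mono mult_left_mono) (auto simp: c_def intro: card_mono)
  also have "\<dots> = real (card V) * (\<Sum>i\<in>A. (b i)\<^sup>2)"
    by (simp add: sum_distrib_left mult.commute)
  finally show ?thesis .
qed

lemma subset_sum_concentration:
  fixes a :: "'a \<Rightarrow> real"
  assumes "finite X" "k \<in> X" "1 \<le> m" "m \<le> card X" "0 < t"
  defines "A \<equiv> X - {k}"
  shows "measure (pmf_of_set {S. S \<subseteq> X \<and> card S = m \<and> k \<in> S})
           {S. t < \<bar>(\<Sum>i\<in>A \<inter> S. a i) - real (m - 1) * (\<Sum>i\<in>A. a i) / real (card A)\<bar>}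
         \<le> (\<Sum>i\<in>A. (a i)\<^sup>2) / t\<^sup>2"
proof -
  define V where "V = {S. S \<subseteq> X \<and> card S = m \<and> k \<in> S}"
  define abar where "abar = (\<Sum>i\<in>A. a i) / real (card A)"
  define Z where "Z S = (\<Sum>i\<in>A \<inter> S. a i) - real (m - 1) * abar" for S
  have "finite A" using assms(1) by (simp add: A_def)
  have "card V = (card X - 1) choose (m - 1)"
    using card_subsets_containing[OF assms(1), of "{k}" m] assms(2,3) by (simp add: V_def)
  then have "0 < card V"
    using assms(3,4) by simp
  then have "finite V" "V \<noteq> {}"
    using card_gt_0_iff by blast+
  have centered: "(\<Sum>i\<in>A. a i - abar) = 0"
    using \<open>finite A\<close> by (cases "A = {}") (simp_all add: sum_subtractf abar_def)
  have Z_eq: "Z S = (\<Sum>i\<in>A \<inter> S. a i - abar)" if "S \<in> V" for S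
  proof -
    have "A \<inter> S = S - {k}" "finite S"
      using that assms(1) by (auto simp: V_def A_def intro: finite_subset)
    then have "card (A \<inter> S) = m - 1"
      using that by (simp add: V_def)
    then show ?thesis by (simp add: Z_def sum_subtractf)
  qed
  have pair_count: "card {S\<in>V. i \<in> S \<and> j \<in> S} = (if 3 \<le> m then (card X - 3) choose (m - 3) else 0)"
    if "i \<in> A" "j \<in> A" "i \<noteq> j" for i j
  proof -
    have "{k, i, j} \<subseteq> X" "card {k, i, j} = 3"
      using that assms(2) by (auto simp: A_def)
    have "{S\<in>V. i \<in> S \<and> j \<in> S} = {S. S \<subseteq> X \<and> card S = m \<and> {k, i, j} \<subseteq> S}"
      by (auto simp: V_def)
    also have "card \<dots> = (if 3 \<le> m then (card X - 3) choose (m - 3) else 0)"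
      by (subst card_subsets_containing[OF assms(1) \<open>{k, i, j} \<subseteq> X\<close>])
        (simp only: \<open>card {k, i, j} = 3\<close>)
    finally show ?thesis .
  qed
  have "(\<Sum>S\<in>V. (Z S)\<^sup>2) = (\<Sum>S\<in>V. (\<Sum>i\<in>A \<inter> S. a i - abar)\<^sup>2)"
    using Z_eq by simp
  also have "\<dots> \<le> real (card V) * (\<Sum>i\<in>A. (a i - abar)\<^sup>2)"
    by (rule sum_square_subset_sum_le[OF \<open>finite V\<close> \<open>finite A\<close> centered pair_count])
  also have "\<dots> \<le> real (card V) * (\<Sum>i\<in>A. (a i)\<^sup>2)"
    using sum_square_add_const[OF centered, of abar] by (intro mult_left_mono) simp_all
  finally have "(\<Sum>S\<in>V. (Z S)\<^sup>2) / (real (card V) * t\<^sup>2) \<le> (\<Sum>i\<in>A. (a i)\<^sup>2) / t\<^sup>2"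
    using \<open>0 < card V\<close> assms(5) by (simp add: field_simps)
  with measure_pmf_of_set_abs_gt_le[OF \<open>finite V\<close> \<open>V \<noteq> {}\<close> assms(5), of Z] show ?thesis
    by (simp add: V_def Z_def abar_def)
qed

lemma Pstar_eq_pmf_of_set:
  assumes "k \<in> {1..d}" "1 \<le> m" "m \<le> d"
  shows "Pstar d m k = pmf_of_set {S. S \<subseteq> {1..d} \<and> card S = m \<and> k \<in> S}"
proof -
  have "0 < card {S. S \<subseteq> {1..d} \<and> card S = m \<and> k \<in> S}"
    using card_subsets_containing[of "{1..d}" "{k}" m] assms by simp
  then have "{S. S \<subseteq> {1..d} \<and> card S = m \<and> k \<in> S} \<noteq> {}"
    using card_gt_0_iff by blast
  moreover have "finite {S. S \<subseteq> {1..d} \<and> card S = m}"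
    by (rule finite_subset[of _ "Pow {1..d}"]) auto
  moreover have "{S. S \<subseteq> {1..d} \<and> card S = m} \<inter> {S. k \<in> S} = {S. S \<subseteq> {1..d} \<and> card S = m \<and> k \<in> S}"
    by auto
  ultimately show ?thesis
    by (simp add: Pstar_def subset_pmf_def cond_pmf_of_set)
qed

definition ycoord :: "real \<Rightarrow> nat \<Rightarrow> (nat \<Rightarrow> real) \<Rightarrow> nat \<Rightarrow> real" where
  "ycoord \<rho> d x i = x i / (1 - \<rho>) + theta \<rho> d * (\<Sum>j=1..d. x j)"

definition ycoord_sq_mean :: "real \<Rightarrow> nat \<Rightarrow> nat \<Rightarrow> (nat \<Rightarrow> real) \<Rightarrow> real" where
  "ycoord_sq_mean \<rho> d k x = (\<Sum>i\<in>{1..d} - {k}. (ycoord \<rho> d x i)\<^sup>2) / (real d - 1)"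

lemma lambda_kd_eq_sum:
  "lambda_kd \<rho> d k x S = (\<Sum>i\<in>({1..d} - {k}) \<inter> S. (ycoord \<rho> d x i)\<^sup>2) / (real d - 1)"
proof -
  have "(\<Sum>i\<in>{1..d} - {k}. (if i \<in> S then 1 else 0) * (ycoord \<rho> d x i)\<^sup>2)
      = (\<Sum>i\<in>({1..d} - {k}) \<inter> S. (ycoord \<rho> d x i)\<^sup>2)"
    by (simp add: sum.inter_restrict, rule sum.cong) auto
  then show ?thesis by (simp add: lambda_kd_def ycoord_def)
qed

lemma Pstar_lambda_kd_concentration:
  assumes "2 \<le> d" "k \<in> {1..d}" "1 \<le> m" "m \<le> d" "0 < t"
  shows "measure (Pstar d m k)
           {S. t < \<bar>lambda_kd \<rho> d k x S - (real m - 1) / (real d - 1) * ycoord_sq_mean \<rho> d k x\<bar>}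
         \<le> (\<Sum>i=1..d. (ycoord \<rho> d x i) ^ 4) / ((real d - 1)\<^sup>2 * t\<^sup>2)"
proof -
  define A where "A = {1..d} - {k}"
  define a where "a i = (ycoord \<rho> d x i)\<^sup>2" for i
  define n where "n = real d - 1"
  have "n > 0" "real (card A) = n"
    using assms(1,2) by (auto simp: A_def n_def)
  have "lambda_kd \<rho> d k x S - (real m - 1) / n * ycoord_sq_mean \<rho> d k x
      = ((\<Sum>i\<in>A \<inter> S. a i) - real (m - 1) * (\<Sum>i\<in>A. a i) / real (card A)) / n" for S
    unfolding lambda_kd_eq_sum ycoord_sq_mean_def A_def[symmetric] a_def[symmetric] n_def[symmetric]
      \<open>real (card A) = n\<close>
    using assms(3) \<open>n > 0\<close> by (simp add: of_nat_diff field_simps)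
  then have "{S. t < \<bar>lambda_kd \<rho> d k x S - (real m - 1) / n * ycoord_sq_mean \<rho> d k x\<bar>}
      = {S. n * t < \<bar>(\<Sum>i\<in>A \<inter> S. a i) - real (m - 1) * (\<Sum>i\<in>A. a i) / real (card A)\<bar>}"
    using \<open>n > 0\<close> by (simp add: abs_div pos_less_divide_eq mult.commute)
  then have "measure (Pstar d m k)
      {S. t < \<bar>lambda_kd \<rho> d k x S - (real m - 1) / n * ycoord_sq_mean \<rho> d k x\<bar>}
      \<le> (\<Sum>i\<in>A. (a i)\<^sup>2) / (n * t)\<^sup>2"
    using subset_sum_concentration[of "{1..d}" k m "n * t" a] assms \<open>n > 0\<close>
    by (simp add: Pstar_eq_pmf_of_set A_def)
  also have "(\<Sum>i\<in>A. (a i)\<^sup>2) = (\<Sum>i\<in>A. (ycoord \<rho> d x i) ^ 4)"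
    by (simp add: a_def flip: power_mult)
  also have "\<dots> \<le> (\<Sum>i=1..d. (ycoord \<rho> d x i) ^ 4)"
    unfolding A_def by (intro sum_mono2) auto
  finally show ?thesis
    by (simp add: n_def power_mult_distrib divide_right_mono)
qed

lemma ycoord_eq_centered:
  fixes x :: "nat \<Rightarrow> real"
  assumes "0 < \<rho>" "\<rho> < 1" "0 < d"
  defines "\<mu> \<equiv> (\<Sum>j=1..d. x j) / real d"
  shows "ycoord \<rho> d x i = (x i - \<mu>) / (1 - \<rho>) + \<mu> / (1 + (real d - 1) * \<rho>)"
proof -
  define s where "s = 1 + (real d - 1) * \<rho>"
  have "s > 0"
    using assms(1,3) by (simp add: s_def add_pos_nonneg)
  have theta_eq: "theta \<rho> d = - \<rho> / ((1 - \<rho>) * s)"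
    unfolding theta_def s_def by (simp add: algebra_simps power2_eq_square)
  have sum_eq: "(\<Sum>j=1..d. x j) = real d * \<mu>"
    using assms(3) by (simp add: \<mu>_def)
  have "- \<rho> / ((1 - \<rho>) * s) * (real d * \<mu>) = - ((s - (1 - \<rho>)) * \<mu>) / ((1 - \<rho>) * s)"
    by (simp add: s_def algebra_simps)
  also have "\<dots> = - \<mu> / (1 - \<rho>) + \<mu> / s"
    using assms(2) \<open>s > 0\<close> by (simp add: field_simps)
  finally show ?thesis
    unfolding ycoord_def theta_eq sum_eq s_def[symmetric] by (simp add: diff_divide_distrib)
qed

lemma sum_ycoord_square:
  fixes x :: "nat \<Rightarrow> real"
  assumes "0 < \<rho>" "\<rho> < 1" "2 \<le> d"
  defines "\<mu> \<equiv> (\<Sum>j=1..d. x j) / real d"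
  shows "(\<Sum>i=1..d. (ycoord \<rho> d x i)\<^sup>2)
           = (real d - 1) * Rd d x / (1 - \<rho>)\<^sup>2 + real d * \<mu>\<^sup>2 / (1 + (real d - 1) * \<rho>)\<^sup>2"
proof -
  have centered: "(\<Sum>i=1..d. x i - \<mu>) = 0"
    using assms(3) by (simp add: sum_subtractf \<mu>_def)
  then have "(\<Sum>i=1..d. (x i - \<mu>) / (1 - \<rho>)) = 0"
    by (simp flip: sum_divide_distrib)
  then have "(\<Sum>i=1..d. (ycoord \<rho> d x i)\<^sup>2)
      = (\<Sum>i=1..d. ((x i - \<mu>) / (1 - \<rho>))\<^sup>2) + real d * (\<mu> / (1 + (real d - 1) * \<rho>))\<^sup>2"
    using assms(1-3) by (simp add: ycoord_eq_centered \<mu>_def sum_square_add_const)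
  moreover have "(real d - 1) * Rd d x = (\<Sum>i=1..d. (x i - \<mu>)\<^sup>2)"
    using assms(3) by (simp add: Rd_def \<mu>_def)
  ultimately show ?thesis
    by (simp add: power_divide sum_divide_distrib)
qed

lemma card_mult_mean_square_le:
  fixes f :: "'a \<Rightarrow> real"
  shows "real (card I) * ((\<Sum>i\<in>I. f i) / real (card I))\<^sup>2 \<le> (\<Sum>i\<in>I. (f i)\<^sup>2)"
proof -
  define \<mu> where "\<mu> = (\<Sum>i\<in>I. f i) / real (card I)"
  have "(\<Sum>i\<in>I. f i - \<mu>) = 0"
    by (cases "finite I \<and> I \<noteq> {}") (auto simp: sum_subtractf \<mu>_def)
  from sum_square_add_const[OF this, of \<mu>] show ?thesis
    by (simp add: \<mu>_def sum_nonneg)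
qed

lemma Fset_sum_ycoord_pow4_less:
  assumes "0 < d" "x \<in> Fset \<rho> d"
  shows "(\<Sum>i=1..d. (ycoord \<rho> d x i) ^ 4) < real d * real d powr (1/8)"
  using assms by (simp add: Fset_def ycoord_def field_simps)

lemma ycoord_sq_mean_deviation_eq:
  fixes x :: "nat \<Rightarrow> real"
  assumes "0 < \<rho>" "\<rho> < 1" "2 \<le> d" "k \<in> {1..d}"
  defines "\<mu> \<equiv> (\<Sum>j=1..d. x j) / real d"
  shows "ycoord_sq_mean \<rho> d k x - 1 / (1 - \<rho>)
           = (Rd d x - (1 - \<rho>)) / (1 - \<rho>)\<^sup>2
             + (real d * \<mu>\<^sup>2 / (1 + (real d - 1) * \<rho>)\<^sup>2 - (ycoord \<rho> d x k)\<^sup>2) / (real d - 1)"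
proof -
  define n where "n = real d - 1"
  have "n > 0"
    using assms(3) by (simp add: n_def)
  have "(n * R / c\<^sup>2 + W - Y) / n - 1 / c = (R - c) / c\<^sup>2 + (W - Y) / n"
    if "c > 0" for c R W Y :: real
    using that \<open>n > 0\<close> by (simp add: field_simps power2_eq_square)
  moreover have "(\<Sum>i\<in>{1..d} - {k}. (ycoord \<rho> d x i)\<^sup>2)
      = n * Rd d x / (1 - \<rho>)\<^sup>2 + real d * \<mu>\<^sup>2 / (1 + (real d - 1) * \<rho>)\<^sup>2 - (ycoord \<rho> d x k)\<^sup>2"
    using sum_ycoord_square[OF assms(1-3), of x] assms(4)
    by (simp add: sum_diff1 n_def \<mu>_def)
  ultimately show ?thesis
    unfolding ycoord_sq_mean_def n_def[symmetric] using assms(2) by simp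
qed

lemma Fset_ycoord_sq_mean_bound:
  assumes "0 < \<rho>" "\<rho> < 1" "2 \<le> d" "k \<in> {1..d}" "x \<in> Fset \<rho> d"
  shows "\<bar>ycoord_sq_mean \<rho> d k x - 1 / (1 - \<rho>)\<bar>
           \<le> real d powr (-1/8) / (1 - \<rho>)\<^sup>2
             + (real d * real d powr (1/8) / (1 + (real d - 1) * \<rho>)\<^sup>2
                + sqrt (real d * real d powr (1/8))) / (real d - 1)"
proof -
  define \<mu> where "\<mu> = (\<Sum>j=1..d. x j) / real d"
  define s where "s = 1 + (real d - 1) * \<rho>"
  define B where "B = real d * real d powr (1/8)"
  define y where "y = ycoord \<rho> d x k"
  have "real d - 1 > 0"
    using assms(3) by simp
  have Rd_close: "\<bar>Rd d x - (1 - \<rho>)\<bar> < real d powr (-1/8)"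
    and "(1 / real d) * (\<Sum>i=1..d. (x i)\<^sup>2) < real d powr (1/8)"
    using assms(5) by (simp_all add: Fset_def)
  then have "(\<Sum>i=1..d. (x i)\<^sup>2) < B"
    using assms(3) by (simp add: B_def field_simps)
  moreover have "real d * \<mu>\<^sup>2 \<le> (\<Sum>i=1..d. (x i)\<^sup>2)"
    using card_mult_mean_square_le[of "{1..d}" x] by (simp add: \<mu>_def)
  ultimately have "real d * \<mu>\<^sup>2 \<le> B"
    by linarith
  have "(y\<^sup>2)\<^sup>2 \<le> (\<Sum>i=1..d. (ycoord \<rho> d x i) ^ 4)"
    using assms(4) by (simp add: y_def flip: power_mult) (intro member_le_sum, auto)
  then have "y\<^sup>2 \<le> sqrt B"
    using Fset_sum_ycoord_pow4_less[OF _ assms(5)] assms(3) by (intro real_le_rsqrt) (simp add: B_def)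
  have "\<bar>ycoord_sq_mean \<rho> d k x - 1 / (1 - \<rho>)\<bar>
      \<le> \<bar>(Rd d x - (1 - \<rho>)) / (1 - \<rho>)\<^sup>2\<bar> + \<bar>(real d * \<mu>\<^sup>2 / s\<^sup>2 - y\<^sup>2) / (real d - 1)\<bar>"
    unfolding ycoord_sq_mean_deviation_eq[OF assms(1-4)] \<mu>_def[symmetric] s_def[symmetric] y_def[symmetric]
    by (rule abs_triangle_ineq)
  also have "\<dots> \<le> \<bar>Rd d x - (1 - \<rho>)\<bar> / (1 - \<rho>)\<^sup>2 + (real d * \<mu>\<^sup>2 / s\<^sup>2 + y\<^sup>2) / (real d - 1)"
    using \<open>real d - 1 > 0\<close> by (simp add: abs_div divide_right_mono abs_le_iff)
  also have "\<dots> \<le> real d powr (-1/8) / (1 - \<rho>)\<^sup>2 + (B / s\<^sup>2 + sqrt B) / (real d - 1)"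
    using Rd_close \<open>real d * \<mu>\<^sup>2 \<le> B\<close> \<open>y\<^sup>2 \<le> sqrt B\<close> \<open>real d - 1 > 0\<close>
    by (intro add_mono divide_right_mono) simp_all
  finally show ?thesis
    by (simp add: B_def s_def)
qed

lemma Fset_ycoord_sq_mean_uniform:
  assumes "0 < \<rho>" "\<rho> < 1" "0 < \<delta>"
  shows "\<forall>\<^sub>F d in sequentially. \<forall>x\<in>Fset \<rho> d. \<forall>k\<in>{1..d}.
           \<bar>ycoord_sq_mean \<rho> d k x - 1 / (1 - \<rho>)\<bar> < \<delta>"
proof -
  have "(\<lambda>d::nat. real d powr (-1/8) / (1 - \<rho>)\<^sup>2
          + (real d * real d powr (1/8) / (1 + (real d - 1) * \<rho>)\<^sup>2
             + sqrt (real d * real d powr (1/8))) / (real d - 1)) \<longlonglongrightarrow> 0"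
    using assms(1,2) by real_asymp
  from order_tendstoD(2)[OF this assms(3)] eventually_ge_at_top[of 2]
  show ?thesis
    by eventually_elim (use Fset_ycoord_sq_mean_bound assms(1,2) in fastforce)
qed

lemma Pstar_lambda_kd_deviation:
  assumes "2 \<le> d" "k \<in> {1..d}" "1 \<le> m" "m \<le> d" "x \<in> Fset \<rho> d" "0 < \<epsilon>"
    and close: "\<bar>(real m - 1) / (real d - 1) * ycoord_sq_mean \<rho> d k x - L\<bar> < \<epsilon> / 2"
  shows "emeasure (measure_pmf (Pstar d m k)) {S. \<bar>lambda_kd \<rho> d k x S - L\<bar> > \<epsilon>}
           \<le> ennreal (4 * (real d * real d powr (1/8)) / ((real d - 1)\<^sup>2 * \<epsilon>\<^sup>2))"
proof -
  define M where "M = (real m - 1) / (real d - 1) * ycoord_sq_mean \<rho> d k x"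
  have "emeasure (measure_pmf (Pstar d m k)) {S. \<bar>lambda_kd \<rho> d k x S - L\<bar> > \<epsilon>}
      \<le> emeasure (measure_pmf (Pstar d m k)) {S. \<epsilon> / 2 < \<bar>lambda_kd \<rho> d k x S - M\<bar>}"
  proof (intro emeasure_mono subsetI)
    fix S assume "S \<in> {S. \<bar>lambda_kd \<rho> d k x S - L\<bar> > \<epsilon>}"
    moreover have "\<bar>lambda_kd \<rho> d k x S - L\<bar> \<le> \<bar>lambda_kd \<rho> d k x S - M\<bar> + \<bar>M - L\<bar>"
      using abs_triangle_ineq[of "lambda_kd \<rho> d k x S - M" "M - L"] by simp
    ultimately show "S \<in> {S. \<epsilon> / 2 < \<bar>lambda_kd \<rho> d k x S - M\<bar>}"
      using close by (simp add: M_def)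
  qed simp
  also have "\<dots> \<le> ennreal ((\<Sum>i=1..d. (ycoord \<rho> d x i) ^ 4) / ((real d - 1)\<^sup>2 * (\<epsilon> / 2)\<^sup>2))"
    unfolding measure_pmf.emeasure_eq_measure M_def using assms(1-4,6)
    by (intro ennreal_leI Pstar_lambda_kd_concentration) simp_all
  also have "\<dots> \<le> ennreal (4 * (real d * real d powr (1/8)) / ((real d - 1)\<^sup>2 * \<epsilon>\<^sup>2))"
    using Fset_sum_ycoord_pow4_less[OF _ assms(5)] assms(1,6)
    by (intro ennreal_leI) (simp add: power_divide field_simps)
  finally show ?thesis .
qed

lemma scaled_ycoord_sq_mean_uniform:
  assumes "0 < \<rho>" "\<rho> < 1" "0 < \<delta>" "q \<longlonglongrightarrow> c" "\<forall>\<^sub>F d in sequentially. 0 \<le> q d \<and> q d \<le> 1"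
  shows "\<forall>\<^sub>F d in sequentially. \<forall>x\<in>Fset \<rho> d. \<forall>k\<in>{1..d}.
           \<bar>q d * ycoord_sq_mean \<rho> d k x - c / (1 - \<rho>)\<bar> < \<delta>"
proof -
  have "\<forall>\<^sub>F d in sequentially. dist (q d) c < \<delta> / 2 * (1 - \<rho>)"
    using assms(2,3) by (intro tendstoD[OF assms(4)]) simp
  moreover note Fset_ycoord_sq_mean_uniform[OF assms(1,2) half_gt_zero[OF assms(3)]] assms(5)
  ultimately show ?thesis
  proof eventually_elim
    case (elim d)
    show ?case
    proof (intro ballI)
      fix x k assume "x \<in> Fset \<rho> d" "k \<in> {1..d}"
      define M where "M = ycoord_sq_mean \<rho> d k x"
      have "q d * M - c / (1 - \<rho>) = q d * (M - 1 / (1 - \<rho>)) + (q d - c) / (1 - \<rho>)"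
        by (simp add: algebra_simps diff_divide_distrib)
      also have "\<bar>\<dots>\<bar> \<le> \<bar>q d * (M - 1 / (1 - \<rho>))\<bar> + \<bar>(q d - c) / (1 - \<rho>)\<bar>"
        by (rule abs_triangle_ineq)
      also have "\<dots> \<le> \<bar>M - 1 / (1 - \<rho>)\<bar> + \<bar>q d - c\<bar> / (1 - \<rho>)"
        using elim(3) assms(2) by (simp add: abs_mult mult_left_le_one_le)
      also have "\<dots> < \<delta>"
      proof -
        have "\<bar>M - 1 / (1 - \<rho>)\<bar> < \<delta> / 2"
          using elim(2) \<open>x \<in> Fset \<rho> d\<close> \<open>k \<in> {1..d}\<close> unfolding M_def by blast
        moreover have "\<bar>q d - c\<bar> / (1 - \<rho>) < \<delta> / 2"
          using elim(1) assms(2) by (simp add: dist_real_def pos_divide_less_eq)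
        ultimately show ?thesis by linarith
      qed
      finally show "\<bar>q d * ycoord_sq_mean \<rho> d k x - c / (1 - \<rho>)\<bar> < \<delta>"
        by (simp add: M_def)
    qed
  qed
qed

lemma eventually_Pstar_lambda_kd_deviation_le:
  fixes m :: "nat \<Rightarrow> nat"
  assumes "0 < \<rho>" "\<rho> < 1" "0 < \<epsilon>" "1 \<le> k"
    and "\<forall>\<^sub>F d in sequentially. 1 \<le> m d \<and> m d \<le> d"
    and "(\<lambda>d. (real (m d) - 1) / (real d - 1)) \<longlonglongrightarrow> c"
  shows "\<forall>\<^sub>F d in sequentially. \<forall>x\<in>Fset \<rho> d.
           emeasure (measure_pmf (Pstar d (m d) k)) {S. \<bar>lambda_kd \<rho> d k x S - c / (1 - \<rho>)\<bar> > \<epsilon>}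
           \<le> ennreal (4 * (real d * real d powr (1/8)) / ((real d - 1)\<^sup>2 * \<epsilon>\<^sup>2))"
proof -
  have "\<forall>\<^sub>F d in sequentially. 0 \<le> (real (m d) - 1) / (real d - 1) \<and> (real (m d) - 1) / (real d - 1) \<le> 1"
    using assms(5) by eventually_elim (auto simp: divide_le_eq_1)
  from scaled_ycoord_sq_mean_uniform[OF assms(1,2) half_gt_zero[OF assms(3)] assms(6) this]
    assms(5) eventually_ge_at_top[of "max k 2"]
  show ?thesis
    by eventually_elim (use assms(3,4) in \<open>auto intro!: Pstar_lambda_kd_deviation\<close>)
qed

lemma sample_fraction_tendsto:
  fixes cd :: "nat \<Rightarrow> real"
  assumes "cd \<longlonglongrightarrow> c"
  shows "(\<lambda>d. (real d * cd d - 1) / (real d - 1)) \<longlonglongrightarrow> c"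
proof -
  have "(\<lambda>d. (real d * cd d - 1) / (real d - 1)) = (\<lambda>d. cd d * (real d / (real d - 1)) - 1 / (real d - 1))"
    by (simp add: fun_eq_iff diff_divide_distrib)
  moreover have "(\<lambda>d. cd d * (real d / (real d - 1)) - 1 / (real d - 1)) \<longlonglongrightarrow> c * 1 - 0"
    by (intro tendsto_intros assms) real_asymp+
  ultimately show ?thesis
    by simp
qed

theorem lemmaA14:
  fixes \<rho> c :: real and cd :: "nat \<Rightarrow> real" and k :: nat
  assumes "0 < \<rho>" and "\<rho> < 1"
    and "\<forall>d. real d * cd d \<in> \<nat> \<and> real d * cd d \<le> real d"
    and "cd \<longlonglongrightarrow> c" and "0 < c" and "c \<le> 1"
    and "1 \<le> k"
  shows "\<forall>\<epsilon>>0. (\<lambda>d. \<Squnion>x\<in>Fset \<rho> d.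
            emeasure (measure_pmf (Pstar d (nat \<lfloor>real d * cd d\<rfloor>) k))
              {S. \<bar>lambda_kd \<rho> d k x S - c / (1 - \<rho>)\<bar> > \<epsilon>}) \<longlonglongrightarrow> 0"
proof (intro allI impI)
  fix \<epsilon> :: real assume "0 < \<epsilon>"
  define m where "m d = nat \<lfloor>real d * cd d\<rfloor>" for d
  define u where "u d = 4 * (real d * real d powr (1/8)) / ((real d - 1)\<^sup>2 * \<epsilon>\<^sup>2)" for d :: nat
  have m: "real (m d) = real d * cd d" for d
    using assms(3) Nats_cases unfolding m_def by (metis floor_of_nat nat_int)
  have m_range: "1 \<le> m d \<and> m d \<le> d" if "0 < cd d" "1 \<le> d" for d
  proof -
    have "0 < real (m d)" "real (m d) \<le> real d"
      using m[of d] assms(3) that by auto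
    then show ?thesis by simp
  qed
  from order_tendstoD(1)[OF assms(4,5)] eventually_ge_at_top[of 1]
  have "\<forall>\<^sub>F d in sequentially. 1 \<le> m d \<and> m d \<le> d"
    by eventually_elim (rule m_range)
  moreover have "(\<lambda>d. (real (m d) - 1) / (real d - 1)) \<longlonglongrightarrow> c"
    unfolding m using assms(4) by (rule sample_fraction_tendsto)
  ultimately have "\<forall>\<^sub>F d in sequentially. \<forall>x\<in>Fset \<rho> d. emeasure (measure_pmf (Pstar d (m d) k))
      {S. \<bar>lambda_kd \<rho> d k x S - c / (1 - \<rho>)\<bar> > \<epsilon>} \<le> ennreal (u d)"
    unfolding u_def by (rule eventually_Pstar_lambda_kd_deviation_le[OF assms(1,2) \<open>0 < \<epsilon>\<close> assms(7)])
  then have bound: "\<forall>\<^sub>F d in sequentially. (\<Squnion>x\<in>Fset \<rho> d. emeasure (measure_pmf (Pstar d (m d) k))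
      {S. \<bar>lambda_kd \<rho> d k x S - c / (1 - \<rho>)\<bar> > \<epsilon>}) \<le> ennreal (u d)"
    by eventually_elim (blast intro: SUP_least)
  have "u \<longlonglongrightarrow> 0"
    unfolding u_def using \<open>0 < \<epsilon>\<close> by real_asymp
  then have u_lim: "(\<lambda>d. ennreal (u d)) \<longlonglongrightarrow> 0"
    using tendsto_ennrealI[of u 0] by simp
  show "(\<lambda>d. \<Squnion>x\<in>Fset \<rho> d. emeasure (measure_pmf (Pstar d (nat \<lfloor>real d * cd d\<rfloor>) k))
      {S. \<bar>lambda_kd \<rho> d k x S - c / (1 - \<rho>)\<bar> > \<epsilon>}) \<longlonglongrightarrow> 0"
    by (rule tendsto_sandwich[OF _ bound[unfolded m_def] tendsto_const u_lim])
      (intro always_eventually allI zero_le)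
qed

end
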